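(* Let $N=q_1^{n_1}q_2^{n_2}\cdots q_r^{n_r}$ with primes $q_1<\dots<q_r$ and positive integers $n_i$, and let $\mathbf{s}$ be a Zadoff–Chu sequence of length $N$. Suppose that for some $1\le i\le r$ and integers $a,b$ the polynomial $\pi(x)=x^{q_i}+ax+b\in\mathbb{Z}_N[x]$ permutes $\mathbb{Z}_N$. Then the periodic auto-correlation $\theta(d)$ of the interleaved sequence $\mathbf{s}\circ\pi$ satisfies $\theta(d)=0$ for every $0<d<N$ with $q_i^{n_i}\nmid d$.
   Context: $\xi_N=e^{-2\pi\sqrt{-1}/N}$, $\xi_N^{x/2}=e^{-\pi\sqrt{-1}x/N}$. A Zadoff–Chu sequence of length $N$ is $s(k)=\xi_N^{u(k^2+(N\bmod2)k+2lk)/2}$, $0\le k<N$, with $\gcd(u,N)=1$ and $l$ an integer. $(\mathbf{s}\circ\pi)(k)=s(\pi(k)\bmod N)$. The periodic auto-correlation of a length-$N$ sequence $\mathbf{y}$ is $\theta(d)=\sum_{k=0}^{N-1}y(k)y^*(k+d)$, indices mod $N$. *)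

theory Defs
  imports Complex_Main "HOL-Computational_Algebra.Primes"
begin

text \<open>Zadoff-Chu sequence of length N with parameters u, l:
  s(k) = xi_N^(u(k^2 + (N mod 2)k + 2lk)/2) = exp(-pi i u(k^2+(N mod 2)k+2lk)/N).\<close>
definition zc :: "nat \<Rightarrow> int \<Rightarrow> int \<Rightarrow> int \<Rightarrow> complex" where
  "zc N u l k = cis (- pi * real_of_int (u * (k^2 + int (N mod 2) * k + 2 * l * k)) / real N)"

definition permutes_ZN :: "nat \<Rightarrow> (int \<Rightarrow> int) \<Rightarrow> bool" where
  "permutes_ZN N f \<longleftrightarrow> bij_betw (\<lambda>k. f k mod int N) {0..<int N} {0..<int N}"

definition autocorr :: "nat \<Rightarrow> (int \<Rightarrow> complex) \<Rightarrow> int \<Rightarrow> complex" where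
  "autocorr N y d = (\<Sum>k\<in>{0..<int N}. y k * cnj (y ((k + d) mod int N)))"

end

(*
  Write S k for the k-th summand of \<theta>(d).  Let q^m be the exact power of q dividing d, so
  m < n where q^n exactly divides N, and put T = N / q^(m+1).  Modulo N the second difference
  \<pi>(k+d+T) - \<pi>(k+T) - \<pi>(k+d) + \<pi>(k) vanishes, while modulo q d and q T the first differences of \<pi>
  along d and T are d and T times a slope, a or a + 1, which is prime to q because \<pi> permutes
  Z_N.  Since the phase of a Zadoff-Chu sequence is quadratic, S (k + T) = \<omega> S k for a
  primitive q-th root of unity \<omega>.  As k \<mapsto> k + T permutes Z_N, \<theta>(d) = \<omega> \<theta>(d), hence \<theta>(d) = 0.
*)
theory Submission
  imports Defs
begin

definition trinomial :: "nat \<Rightarrow> int \<Rightarrow> int \<Rightarrow> int \<Rightarrow> int" where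
  "trinomial q a b x = x ^ q + a * x + b"

definition trinomial_slope :: "nat \<Rightarrow> int \<Rightarrow> int \<Rightarrow> int" where
  "trinomial_slope q a t = a + (if int q dvd t then 0 else 1)"

lemma pow_second_difference_dvd:
  fixes k s t :: int
  assumes "prime q"
  shows "int q * s * t dvd (k + s + t) ^ q - (k + s) ^ q - (k + t) ^ q + k ^ q"
proof -
  obtain r where q: "q = Suc r"
    using assms prime_gt_0_nat gr0_implies_Suc by blast
  define f where "f i = of_nat (q choose i) * t ^ i * ((k + s) ^ (q - i) - k ^ (q - i))" for i
  have "(t + (k + s)) ^ q - (t + k) ^ q =
      (\<Sum>i\<le>q. of_nat (q choose i) * t ^ i * (k + s) ^ (q - i)) -
      (\<Sum>i\<le>q. of_nat (q choose i) * t ^ i * k ^ (q - i))"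
    by (simp only: binomial_ring)
  also have "\<dots> = (\<Sum>i\<le>q. f i)"
    by (simp only: f_def right_diff_distrib sum_subtractf)
  also have "\<dots> = f 0 + (\<Sum>i\<le>r. f (Suc i))"
    unfolding q by (rule sum.atMost_Suc_shift)
  also have "f 0 = (k + s) ^ q - k ^ q"
    by (simp add: f_def)
  finally have expand: "(k + s + t) ^ q - (k + s) ^ q - (k + t) ^ q + k ^ q = (\<Sum>i\<le>r. f (Suc i))"
    by (simp add: add.commute add.left_commute)
  have "int q * t * s dvd f (Suc i)" if "i \<le> r" for i
  proof (cases "i = r")
    case True
    then show ?thesis by (simp add: f_def q)
  next
    case False
    have "q dvd q choose Suc i"
      using dvd_choose_prime[of "Suc i" q] assms that q False by simp
    then have "int q dvd of_nat (q choose Suc i)"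
      by (simp only: of_nat_dvd_iff)
    then have "int q * t dvd of_nat (q choose Suc i) * t ^ Suc i"
      by (rule mult_dvd_mono) simp
    moreover have "s dvd (k + s) ^ (q - Suc i) - k ^ (q - Suc i)"
      using power_diff_sumr2[where x = "k + s" and y = k] by simp
    ultimately show ?thesis
      unfolding f_def by (rule mult_dvd_mono)
  qed
  then have "int q * t * s dvd (\<Sum>i\<le>r. f (Suc i))"
    by (intro dvd_sum) auto
  then show ?thesis
    unfolding expand by (simp only: mult.assoc mult.commute[of s t])
qed

lemma prime_mult_dvd_pow_add_sub:
  fixes k t :: int
  assumes "prime q"
  shows "int q * t dvd (k + t) ^ q - k ^ q - t ^ q"
proof -
  have "int q * k * t dvd (0 + k + t) ^ q - (0 + k) ^ q - (0 + t) ^ q + 0 ^ q"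
    by (rule pow_second_difference_dvd[OF assms])
  moreover have "(0 + k + t) ^ q - (0 + k) ^ q - (0 + t) ^ q + 0 ^ q = (k + t) ^ q - k ^ q - t ^ q"
    using prime_gt_0_nat[OF assms] by (simp add: power_0_left)
  moreover have "int q * k * t = int q * t * k"
    by (simp add: mult_ac)
  ultimately show ?thesis
    by (metis dvd_mult_left)
qed

lemma prime_dvd_pow_sub_self:
  fixes x :: int
  assumes "prime q"
  shows "int q dvd x ^ q - x"
proof (induction x rule: int_induct[where k = 0])
  case base
  then show ?case
    using prime_gt_0_nat[OF assms] by (simp add: power_0_left)
next
  case (step1 i)
  have "int q dvd (i + 1) ^ q - i ^ q - 1"
    using prime_mult_dvd_pow_add_sub[OF assms, where k = i and t = 1] by simp
  from dvd_add[OF this step1(2)] show ?case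
    by (simp add: algebra_simps)
next
  case (step2 i)
  have "int q dvd i ^ q - (i - 1) ^ q - 1"
    using prime_mult_dvd_pow_add_sub[OF assms, where k = "i - 1" and t = 1] by simp
  from dvd_diff[OF step2(2) this] show ?case
    by (simp add: algebra_simps)
qed

lemma prime_mult_dvd_pow_increment:
  fixes k t :: int
  assumes "prime q"
  shows "int q * t dvd (k + t) ^ q - k ^ q - (if int q dvd t then 0 else t)"
proof -
  have q2: "q \<ge> 2"
    using assms prime_ge_2_nat by blast
  have "int q * t dvd t ^ q - (if int q dvd t then 0 else t)"
  proof (cases "int q dvd t")
    case True
    then obtain r where "t = int q * r" ..
    then have "int q * t dvd t * t"
      by (simp add: ac_simps)
    also have "t * t dvd t ^ q"
      using q2 by (simp add: le_imp_power_dvd flip: power2_eq_square)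
    finally show ?thesis
      using True by simp
  next
    case False
    have "coprime (int q) t"
      using False assms by (simp add: prime_imp_coprime prime_nat_int_transfer)
    moreover have "int q dvd t ^ q - t"
      by (rule prime_dvd_pow_sub_self[OF assms])
    moreover have "t dvd t ^ q - t"
      using q2 by (simp add: dvd_diff)
    ultimately show ?thesis
      using False by (simp add: divides_mult)
  qed
  from dvd_add[OF prime_mult_dvd_pow_add_sub[OF assms, where k = k and t = t] this] show ?thesis
    by (simp add: algebra_simps)
qed

lemma mult_dvd_prod_diff:
  fixes x s t D E c e :: "'a :: comm_ring_1"
  assumes "x * s dvd D - c * s" and "x * t dvd E - e * t"
  shows "x * s * t dvd D * E - c * e * (s * t)"
proof -
  obtain r1 r2 where "D - c * s = x * s * r1" and "E - e * t = x * t * r2"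
    using assms by (auto elim!: dvdE)
  then have "D * E - c * e * (s * t) = x * s * t * (c * r2 + e * r1 + x * r1 * r2)"
    by (simp add: algebra_simps eq_diff_eq)
  then show ?thesis
    by (rule dvdI)
qed

lemma trinomial_cong:
  "x mod n = y mod n \<Longrightarrow> trinomial q a b x mod n = trinomial q a b y mod n"
  unfolding trinomial_def by (metis mod_add_cong mod_mult_cong power_mod)

lemma trinomial_increment_dvd:
  assumes "prime q"
  shows "int q * t dvd trinomial q a b (k + t) - trinomial q a b k - trinomial_slope q a t * t"
  using prime_mult_dvd_pow_increment[OF assms, where k = k and t = t]
  by (cases "int q dvd t") (simp_all add: trinomial_def trinomial_slope_def algebra_simps)

lemma trinomial_second_difference_dvd:
  assumes "prime q"
  shows "int q * s * t dvd trinomial q a b (k + s + t) - trinomial q a b (k + t)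
           - trinomial q a b (k + s) + trinomial q a b k"
proof -
  have "trinomial q a b (k + s + t) - trinomial q a b (k + t) - trinomial q a b (k + s) + trinomial q a b k
      = (k + s + t) ^ q - (k + s) ^ q - (k + t) ^ q + k ^ q"
    by (simp add: trinomial_def algebra_simps)
  then show ?thesis
    using pow_second_difference_dvd[OF assms, where k = k and s = s and t = t] by simp
qed

lemma permutes_ZN_trinomial_not_dvd_coeff_add_1:
  assumes "N > 0" and "prime q" and "q dvd N" and "permutes_ZN N (trinomial q a b)"
  shows "\<not> int q dvd a + 1"
proof
  assume dvd_a1: "int q dvd a + 1"
  \<comment> \<open>by Fermat, every value of the trinomial is congruent to b modulo q, so b + 1 is never hit\<close>
  have "(b + 1) mod int N \<in> (\<lambda>k. trinomial q a b k mod int N) ` {0..<int N}"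
    using assms(1,4) unfolding permutes_ZN_def bij_betw_def by simp
  then obtain k where "trinomial q a b k mod int N = (b + 1) mod int N"
    by auto
  then have "int N dvd trinomial q a b k - (b + 1)"
    by (simp only: mod_eq_dvd_iff)
  then have hit: "int q dvd trinomial q a b k - (b + 1)"
    using assms(3) by (meson dvd_trans int_dvd_int_iff)
  have miss: "int q dvd trinomial q a b k - b"
  proof -
    have "trinomial q a b k - b = (k ^ q - k) + (a + 1) * k"
      by (simp add: trinomial_def algebra_simps)
    then show ?thesis
      using prime_dvd_pow_sub_self[OF assms(2)] dvd_a1 by simp
  qed
  have "int q dvd (trinomial q a b k - b) - (trinomial q a b k - (b + 1))"
    using miss hit by (rule dvd_diff)
  with assms(2) show False
    by simp
qed

lemma permutes_ZN_trinomial_not_dvd_coeff: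
  assumes "N > 0" and "prime q" and "q ^ 2 dvd N" and "permutes_ZN N (trinomial q a b)"
  shows "\<not> int q dvd a"
proof
  assume "int q dvd a"
  then obtain a' where a: "a = int q * a'" ..
  obtain r where N: "N = q ^ 2 * r"
    using assms(3) ..
  have q2: "q \<ge> 2"
    using assms(2) prime_ge_2_nat by blast
  \<comment> \<open>the trinomial takes the same value modulo N at 0 and at N / q\<close>
  define k where "k = int (q * r)"
  have "0 < k" and "k < int N"
    using assms(1) q2 by (auto simp: k_def N power2_eq_square)
  have "int N dvd k ^ 2"
    by (simp add: k_def N power2_eq_square ac_simps)
  also have "k ^ 2 dvd k ^ q"
    using q2 by (rule le_imp_power_dvd)
  finally have "int N dvd k ^ q" .
  moreover have "int N dvd a * k"
    by (simp add: a k_def N power2_eq_square ac_simps)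
  moreover have "trinomial q a b k - trinomial q a b 0 = k ^ q + a * k"
    using q2 by (simp add: trinomial_def power_0_left)
  ultimately have "trinomial q a b k mod int N = trinomial q a b 0 mod int N"
    by (simp add: mod_eq_dvd_iff)
  moreover have "inj_on (\<lambda>k. trinomial q a b k mod int N) {0..<int N}"
    using assms(4) by (simp add: permutes_ZN_def bij_betw_def)
  ultimately have "k = 0"
    using \<open>0 < k\<close> \<open>k < int N\<close> by (auto dest: inj_onD)
  with \<open>0 < k\<close> show False
    by simp
qed

lemma permutes_ZN_trinomial_not_dvd_slope:
  assumes "N > 0" and "prime q" and "q dvd N" and "permutes_ZN N (trinomial q a b)"
    and "int q dvd t \<Longrightarrow> q ^ 2 dvd N"
  shows "\<not> int q dvd trinomial_slope q a t"
  using assms permutes_ZN_trinomial_not_dvd_coeff permutes_ZN_trinomial_not_dvd_coeff_add_1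
  by (auto simp: trinomial_slope_def)

lemma prime_multiplicity_shift:
  fixes d :: int
  assumes "prime q" and "\<not> int q ^ multiplicity q N dvd d"
  obtains T d' where "int q * d * T = int N * d'" and "\<not> int q dvd d'"
    and "int q dvd d \<Longrightarrow> q ^ 2 dvd N" and "int q dvd T \<Longrightarrow> q ^ 2 dvd N"
proof -
  define m where "m = multiplicity (int q) d"
  have "d \<noteq> 0"
    using assms(2) by auto
  moreover have "\<not> is_unit (int q)"
    using prime_ge_2_nat[OF assms(1)] by simp
  ultimately obtain d' where d: "d = int q ^ m * d'" and "\<not> int q dvd d'"
    unfolding m_def by (rule multiplicity_decompose')
  have "m < multiplicity q N"
  proof (rule ccontr)
    assume "\<not> ?thesis"
    then have "int q ^ multiplicity q N dvd d"
      by (simp add: m_def multiplicity_dvd')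
    with assms(2) show False ..
  qed
  then have "q ^ Suc m dvd N"
    by (simp only: multiplicity_dvd' flip: Suc_le_eq)
  then obtain T where N: "N = q ^ Suc m * T" ..
  show ?thesis
  proof (rule that[of "int T" d'])
    show "int q * d * int T = int N * d'"
      by (simp add: d N algebra_simps)
    show "q ^ 2 dvd N" if "int q dvd d"
    proof -
      have "2 \<le> Suc m"
        using that d \<open>\<not> int q dvd d'\<close> by (cases m) auto
      then have "q ^ 2 dvd q ^ Suc m"
        by (rule le_imp_power_dvd)
      then show ?thesis
        unfolding N by simp
    qed
    show "q ^ 2 dvd N" if "int q dvd int T"
    proof -
      have "q * q dvd q ^ Suc m * T"
        using that by (intro mult_dvd_mono) simp_all
      then show ?thesis
        unfolding N by (simp add: power2_eq_square)
    qed
  qed fact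
qed

lemma cis_2pi_div_eq_iff:
  assumes "N > 0"
  shows "cis (2 * pi * of_int A / real N) = cis (2 * pi * of_int B / real N) \<longleftrightarrow> int N dvd A - B"
proof -
  have "cis (2 * pi * of_int A / real N) = cis (2 * pi * of_int B / real N) \<longleftrightarrow>
      (\<exists>n::int. 2 * pi * of_int A / real N = 2 * pi * of_int B / real N + 2 * pi * of_int n)"
    using sin_cos_eq_iff by (auto simp: complex_eq_iff)
  also have "\<dots> \<longleftrightarrow> (\<exists>n::int. A = B + int N * n)"
  proof -
    have "2 * pi * of_int A / real N = 2 * pi * of_int B / real N + 2 * pi * of_int n \<longleftrightarrow>
        (2 * pi) * of_int A = (2 * pi) * of_int (B + int N * n)" for n :: int
      using assms by (simp add: field_simps)
    then show ?thesis by (simp only: mult_cancel_left of_int_eq_iff) simp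
  qed
  also have "\<dots> \<longleftrightarrow> int N dvd A - B"
    by (metis add_diff_cancel_left' diff_add_cancel dvd_def)
  finally show ?thesis .
qed

lemma cis_2pi_div_ne_1:
  assumes "N > 0" and "int q * d * T = int N * d'" and "\<not> int q dvd W * d'"
  shows "cis (2 * pi * of_int (W * (d * T)) / real N) \<noteq> 1"
proof
  assume "cis (2 * pi * of_int (W * (d * T)) / real N) = 1"
  then have "int N dvd W * (d * T)"
    using cis_2pi_div_eq_iff[OF assms(1), of "W * (d * T)" 0] by simp
  then have "int N * int q dvd W * (d * T) * int q"
    by (rule mult_dvd_mono) simp
  also have "\<dots> = W * (int q * d * T)"
    by (simp add: ac_simps)
  also have "\<dots> = int N * (W * d')"
    unfolding assms(2) by (simp add: ac_simps)
  finally have "int q dvd W * d'"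
    using assms(1) by simp
  with assms(3) show False ..
qed

lemma zc_cong:
  assumes "x mod int N = y mod int N"
  shows "zc N u l x = zc N u l y"
proof (cases "N = 0")
  case True
  with assms show ?thesis by simp
next
  case False
  have "int N dvd x - y"
    using assms by (simp add: mod_eq_dvd_iff)
  then obtain z where "x - y = int N * z" ..
  then have x: "x = y + int N * z"
    by simp
  \<comment> \<open>the term (N mod 2) x makes the exponent move by an even multiple of N, as the half-integer
    powers of \<xi>_N require\<close>
  have "even (z * (int N * z + int (N mod 2)))"
    by (cases "even N"; cases "even z") (auto simp: odd_iff_mod_2_eq_one[symmetric])
  then obtain w where w: "z * (int N * z + int (N mod 2)) = 2 * w" ..
  define A where "A = u * (y^2 + int (N mod 2) * y + 2 * l * y)"
  define j where "j = u * z * (y + l) + u * w"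
  have "u * (x^2 + int (N mod 2) * x + 2 * l * x)
      = A + 2 * int N * (u * z * (y + l)) + u * int N * (z * (int N * z + int (N mod 2)))"
    unfolding x A_def by (simp add: power2_eq_square algebra_simps)
  also have "\<dots> = A + 2 * int N * j"
    unfolding w j_def by (simp add: algebra_simps)
  finally have exponent: "u * (x^2 + int (N mod 2) * x + 2 * l * x) = A + 2 * int N * j" .
  have "cis (- pi * of_int (A + 2 * int N * j) / real N) =
      cis (- pi * of_int A / real N) * cis (2 * pi * of_int (- j))"
    unfolding cis_mult by (rule arg_cong[where f = cis]) (use False in \<open>simp add: field_simps\<close>)
  also have "cis (2 * pi * of_int (- j)) = 1"
    by (rule cis_multiple_2pi) simp
  finally show ?thesis
    unfolding zc_def exponent A_def by simp
qed

lemma zc_mod [simp]: "zc N u l (x mod int N) = zc N u l x"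
  by (rule zc_cong) simp

lemma zc_trinomial_cong:
  "x mod int N = y mod int N \<Longrightarrow> zc N u l (trinomial q a b x) = zc N u l (trinomial q a b y)"
  by (intro zc_cong trinomial_cong)

lemma zc_mult_cnj_shift:
  "zc N u l (x + s) * cnj (zc N u l (x + s + D)) =
     zc N u l x * cnj (zc N u l (x + D)) * cis (2 * pi * of_int (u * D * s) / real N)"
  unfolding zc_def cis_cnj cis_mult
  by (rule arg_cong[where f = cis])
     (simp add: add_divide_distrib[symmetric] diff_divide_distrib[symmetric] power2_eq_square algebra_simps)

lemma zc_correlation_shift:
  fixes f :: "int \<Rightarrow> int"
  assumes "N > 0"
    and "int N dvd f (k + t + d) - f (k + t) - f (k + d) + f k"
    and "int N dvd (f (k + d) - f k) * (f (k + t) - f k) - A"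
  shows "zc N u l (f (k + t)) * cnj (zc N u l (f (k + t + d))) =
           zc N u l (f k) * cnj (zc N u l (f (k + d))) * cis (2 * pi * of_int (u * A) / real N)"
proof -
  define x D s where "x = f k" and "D = f (k + d) - f k" and "s = f (k + t) - f k"
  have "f (k + t + d) - (x + s + D) = f (k + t + d) - f (k + t) - f (k + d) + f k"
    by (simp add: x_def s_def D_def)
  then have "f (k + t + d) mod int N = (x + s + D) mod int N"
    using assms(2) by (simp only: mod_eq_dvd_iff)
  then have "zc N u l (f (k + t + d)) = zc N u l (x + s + D)"
    by (rule zc_cong)
  moreover have "f (k + t) = x + s"
    by (simp add: x_def s_def)
  ultimately have "zc N u l (f (k + t)) * cnj (zc N u l (f (k + t + d))) =
      zc N u l (x + s) * cnj (zc N u l (x + s + D))"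
    by simp
  also have "\<dots> = zc N u l x * cnj (zc N u l (x + D)) * cis (2 * pi * of_int (u * D * s) / real N)"
    by (rule zc_mult_cnj_shift)
  also have "cis (2 * pi * of_int (u * D * s) / real N) = cis (2 * pi * of_int (u * A) / real N)"
  proof -
    have "u * D * s - u * A = u * ((f (k + d) - f k) * (f (k + t) - f k) - A)"
      by (simp add: D_def s_def algebra_simps)
    then have "int N dvd u * D * s - u * A"
      using assms(3) by simp
    then show ?thesis
      using cis_2pi_div_eq_iff[OF assms(1)] by blast
  qed
  finally show ?thesis
    by (simp add: x_def D_def)
qed

lemma zc_trinomial_correlation_shift:
  assumes "N > 0" and "prime q" and "int q * d * T = int N * d'"
  shows "zc N u l (trinomial q a b (k + T)) * cnj (zc N u l (trinomial q a b (k + T + d))) =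
           zc N u l (trinomial q a b k) * cnj (zc N u l (trinomial q a b (k + d))) *
           cis (2 * pi * of_int (u * (trinomial_slope q a d * trinomial_slope q a T * (d * T))) / real N)"
proof (rule zc_correlation_shift[OF assms(1)])
  let ?P = "trinomial q a b"
  have "int q * d * T dvd ?P (k + d + T) - ?P (k + T) - ?P (k + d) + ?P k"
    by (rule trinomial_second_difference_dvd[OF assms(2)])
  then show "int N dvd ?P (k + T + d) - ?P (k + T) - ?P (k + d) + ?P k"
    unfolding assms(3) by (simp add: add.commute add.left_commute dvd_mult_left)
  have "int q * d * T dvd (?P (k + d) - ?P k) * (?P (k + T) - ?P k)
      - trinomial_slope q a d * trinomial_slope q a T * (d * T)"
    by (intro mult_dvd_prod_diff trinomial_increment_dvd[OF assms(2)])
  then show "int N dvd (?P (k + d) - ?P k) * (?P (k + T) - ?P k)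
      - trinomial_slope q a d * trinomial_slope q a T * (d * T)"
    unfolding assms(3) by (rule dvd_mult_left)
qed

lemma sum_eq_0_if_shift_twists:
  fixes S :: "int \<Rightarrow> 'a :: idom"
  assumes periodic: "\<And>k. S (k mod n) = S k"
    and twist: "\<And>k. S (k + t) = S k * \<omega>"
    and "\<omega> \<noteq> 1"
  shows "(\<Sum>k\<in>{0..<n}. S k) = 0"
proof (cases "n > 0")
  case False
  then show ?thesis by simp
next
  case True
  have "bij_betw (\<lambda>k. (k + t) mod n) {0..<n} {0..<n}"
    by (rule bij_betw_byWitness[where f' = "\<lambda>k. (k - t) mod n"]) (auto simp: mod_simps True)
  then have "(\<Sum>k\<in>{0..<n}. S ((k + t) mod n)) = (\<Sum>k\<in>{0..<n}. S k)"
    by (rule sum.reindex_bij_betw)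
  then have "(\<Sum>k\<in>{0..<n}. S k) = (\<Sum>k\<in>{0..<n}. S ((k + t) mod n))"
    by simp
  also have "\<dots> = (\<Sum>k\<in>{0..<n}. S k) * \<omega>"
    by (simp add: periodic twist sum_distrib_right)
  finally have "(\<Sum>k\<in>{0..<n}. S k) * (1 - \<omega>) = 0"
    by (simp add: algebra_simps)
  with \<open>\<omega> \<noteq> 1\<close> show ?thesis
    by simp
qed

lemma autocorr_comp_mod:
  assumes "\<And>x. y (x mod int N) = y x"
    and "\<And>x. f (x mod int N) mod int N = f x mod int N"
  shows "autocorr N (\<lambda>k. y (f k mod int N)) d = (\<Sum>k\<in>{0..<int N}. y (f k) * cnj (y (f (k + d))))"
  unfolding autocorr_def by (simp add: assms)

theorem proposition1:
  fixes N q :: nat and u l a b d :: int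
  assumes "N > 0"
    and "prime q" and "q dvd N"
    and "coprime u (int N)"
    and "permutes_ZN N (\<lambda>x. x ^ q + a * x + b)"
    and "0 < d" and "d < int N"
    and "\<not> (int q ^ multiplicity q N) dvd d"
  shows "autocorr N (\<lambda>k. zc N u l ((k ^ q + a * k + b) mod int N)) d = 0"
proof -
  let ?P = "trinomial q a b"
  define S where "S k = zc N u l (?P k) * cnj (zc N u l (?P (k + d)))" for k
  obtain T d' where NdT: "int q * d * T = int N * d'" and "\<not> int q dvd d'"
    and "int q dvd d \<Longrightarrow> q ^ 2 dvd N" and "int q dvd T \<Longrightarrow> q ^ 2 dvd N"
    using prime_multiplicity_shift[OF assms(2,8)] by blast
  define W where "W = u * (trinomial_slope q a d * trinomial_slope q a T)"
  have "permutes_ZN N ?P"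
    using assms(5) by (simp add: trinomial_def[abs_def])
  then have "\<not> int q dvd trinomial_slope q a t" if "int q dvd t \<Longrightarrow> q ^ 2 dvd N" for t
    using permutes_ZN_trinomial_not_dvd_slope assms(1-3) that by blast
  moreover have "\<not> int q dvd u"
    using assms(2-4) by (meson coprime_common_divisor int_dvd_int_iff not_prime_unit prime_nat_int_transfer)
  ultimately have "\<not> int q dvd W * d'"
    using \<open>\<not> int q dvd d'\<close> \<open>int q dvd d \<Longrightarrow> q ^ 2 dvd N\<close> \<open>int q dvd T \<Longrightarrow> q ^ 2 dvd N\<close> assms(2)
    by (simp add: W_def prime_dvd_mult_iff prime_nat_int_transfer)
  then have "cis (2 * pi * of_int (W * (d * T)) / real N) \<noteq> 1"
    by (rule cis_2pi_div_ne_1[OF assms(1) NdT])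
  moreover have "S (k + T) = S k * cis (2 * pi * of_int (W * (d * T)) / real N)" for k
    using zc_trinomial_correlation_shift[OF assms(1,2) NdT] by (simp add: S_def W_def mult.assoc)
  moreover have "S (k mod int N) = S k" for k
    unfolding S_def
    using zc_trinomial_cong[where x = "k mod int N" and y = k]
      zc_trinomial_cong[where x = "k mod int N + d" and y = "k + d"]
    by (simp add: mod_add_left_eq)
  ultimately have "(\<Sum>k\<in>{0..<int N}. S k) = 0"
    by (intro sum_eq_0_if_shift_twists)
  moreover have "autocorr N (\<lambda>k. zc N u l (?P k mod int N)) d = (\<Sum>k\<in>{0..<int N}. S k)"
    unfolding S_def by (rule autocorr_comp_mod) (auto intro: trinomial_cong)
  ultimately show ?thesis
    by (simp add: trinomial_def)
qed

end
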